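(* Let $G=(V,E)$ be a finite simple undirected graph with at least $2$ vertices. Then there exists a vertex $u\in V$ such that $C(G[V\setminus\{u\}])\le C(G)$.
   Context: For a vertex $u$ of a graph, $d_u$ is its degree and $T(u)$ the number of triangles containing $u$; the local clustering coefficient is $C(u)=\frac{2T(u)}{d_u(d_u-1)}$ if $d_u>1$ and $C(u)=0$ otherwise. The average clustering coefficient of a graph $H$ with $n\ge1$ vertices is $C(H)=\frac1n\sum_{u\in V(H)}C(u)$ (local coefficients computed in $H$). $G[S]$ denotes the subgraph induced by $S$. *)

theory Defs
  imports Main Complex_Main
begin

definition simple_graph :: "'a set \<Rightarrow> ('a \<Rightarrow> 'a \<Rightarrow> bool) \<Rightarrow> bool" where
  "simple_graph V E \<longleftrightarrow> finite V \<and> (\<forall>x y. E x y \<longrightarrow> x \<in> V \<and> y \<in> V)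
     \<and> (\<forall>x y. E x y \<longrightarrow> E y x) \<and> (\<forall>x. \<not> E x x)"

text \<open>All quantities below are computed in the induced subgraph G[S] of (V,E), i.e.
  in the graph with vertex set S and edges E restricted to S.\<close>

definition nbrs :: "'a set \<Rightarrow> ('a \<Rightarrow> 'a \<Rightarrow> bool) \<Rightarrow> 'a \<Rightarrow> 'a set" where
  "nbrs S E u = {v \<in> S. E u v}"

definition degree :: "'a set \<Rightarrow> ('a \<Rightarrow> 'a \<Rightarrow> bool) \<Rightarrow> 'a \<Rightarrow> nat" where
  "degree S E u = card (nbrs S E u)"

definition triangles :: "'a set \<Rightarrow> ('a \<Rightarrow> 'a \<Rightarrow> bool) \<Rightarrow> 'a \<Rightarrow> nat" where
  "triangles S E u = card {{v, w} | v w. v \<in> nbrs S E u \<and> w \<in> nbrs S E u \<and> E v w}"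

definition local_clustering :: "'a set \<Rightarrow> ('a \<Rightarrow> 'a \<Rightarrow> bool) \<Rightarrow> 'a \<Rightarrow> real" where
  "local_clustering S E u =
     (if degree S E u > 1
      then 2 * real (triangles S E u) / (real (degree S E u) * (real (degree S E u) - 1))
      else 0)"

definition avg_clustering :: "'a set \<Rightarrow> ('a \<Rightarrow> 'a \<Rightarrow> bool) \<Rightarrow> real" where
  "avg_clustering S E = (\<Sum>u\<in>S. local_clustering S E u) / real (card S)"

end

theory Submission
  imports Defs
begin

text \<open>Fix a vertex v of degree d and delete another vertex x. If x is not a neighbour of v,
  C(v) is unchanged. If it is, v keeps exactly the triangles avoiding x and its degree drops to
  d - 1; since each triangle at v avoids d - 2 of the d neighbours, summing over all neighbours x
  gives T(v)(d - 2) triangles with normaliser (d - 1)(d - 2), i.e. exactly d C(v) (both sides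
  vanish when d \<le> 2). So the sum over x \<noteq> v of C(v) in G - x is at most (n - 1) C(v); summing
  over v shows that the averages C(G - x) have mean at most C(G), so one of them is at most C(G).\<close>

definition neighbour_edges :: "'a set \<Rightarrow> ('a \<Rightarrow> 'a \<Rightarrow> bool) \<Rightarrow> 'a \<Rightarrow> 'a set set" where
  "neighbour_edges S E u = {{v, w} | v w. v \<in> nbrs S E u \<and> w \<in> nbrs S E u \<and> E v w}"

lemma triangles_eq_card_neighbour_edges: "triangles S E u = card (neighbour_edges S E u)"
  unfolding triangles_def neighbour_edges_def ..

lemma nbrs_Diff_singleton: "nbrs (S - {x}) E u = nbrs S E u - {x}"
  unfolding nbrs_def by auto

lemma neighbour_edges_Diff_singleton:
  "neighbour_edges (S - {x}) E u = {p \<in> neighbour_edges S E u. x \<notin> p}"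
  unfolding neighbour_edges_def nbrs_Diff_singleton by auto

lemma simple_graph_finite: "simple_graph S E \<Longrightarrow> finite S"
  unfolding simple_graph_def by simp

lemma simple_graph_irrefl: "simple_graph S E \<Longrightarrow> \<not> E x x"
  unfolding simple_graph_def by simp

lemma finite_nbrs: "finite S \<Longrightarrow> finite (nbrs S E u)"
  unfolding nbrs_def by simp

lemma finite_neighbour_edges:
  assumes "finite S"
  shows "finite (neighbour_edges S E u)"
proof -
  have "neighbour_edges S E u \<subseteq> Pow (nbrs S E u)"
    unfolding neighbour_edges_def by auto
  then show ?thesis
    using finite_nbrs[OF assms] by (meson finite_Pow_iff finite_subset)
qed

lemma neighbour_edge_subset_card:
  assumes "\<And>x. \<not> E x x" and "p \<in> neighbour_edges S E u"
  shows "p \<subseteq> nbrs S E u" and "card p = 2"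
  using assms unfolding neighbour_edges_def by (auto simp: card_insert_if)

lemma local_clustering_nonneg: "local_clustering S E u \<ge> 0"
  unfolding local_clustering_def by auto

lemma degree_Diff_neighbour:
  assumes "finite S" and "x \<in> nbrs S E u"
  shows "degree (S - {x}) E u = degree S E u - 1"
  using assms finite_nbrs unfolding degree_def nbrs_Diff_singleton by simp

lemma local_clustering_Diff_non_neighbour:
  assumes "x \<notin> nbrs S E u"
  shows "local_clustering (S - {x}) E u = local_clustering S E u"
proof -
  have "nbrs (S - {x}) E u = nbrs S E u"
    using assms unfolding nbrs_Diff_singleton by simp
  then show ?thesis
    unfolding local_clustering_def degree_def triangles_def by simp
qed

lemma sum_triangles_Diff_neighbour:
  assumes "finite S" and "\<And>x. \<not> E x x"
  shows "(\<Sum>x\<in>nbrs S E u. triangles (S - {x}) E u) = triangles S E u * (degree S E u - 2)"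
proof -
  let ?N = "nbrs S E u" and ?P = "neighbour_edges S E u"
  have fin_N: "finite ?N" and fin_P: "finite ?P"
    using finite_nbrs[OF assms(1)] finite_neighbour_edges[OF assms(1)] by auto
  have "(\<Sum>x\<in>?N. triangles (S - {x}) E u) = (\<Sum>x\<in>?N. \<Sum>p\<in>?P. if x \<notin> p then 1 else 0)"
    unfolding triangles_eq_card_neighbour_edges neighbour_edges_Diff_singleton using fin_P
    by (auto simp: sum.If_cases intro!: sum.cong arg_cong[where f = card])
  also have "\<dots> = (\<Sum>p\<in>?P. \<Sum>x\<in>?N. if x \<notin> p then 1 else 0)"
    by (rule sum.swap)
  also have "\<dots> = (\<Sum>p\<in>?P. degree S E u - 2)"
  proof (rule sum.cong[OF refl])
    fix p assume "p \<in> ?P"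
    then have "p \<subseteq> ?N" and "card p = 2"
      by (simp_all add: neighbour_edge_subset_card[where E = E, OF assms(2)])
    then have "card (?N - p) = degree S E u - 2"
      using fin_N unfolding degree_def by (simp add: card_Diff_subset finite_subset)
    then show "(\<Sum>x\<in>?N. if x \<notin> p then 1 else 0) = degree S E u - 2"
      using fin_N by (simp add: sum.If_cases set_diff_eq Int_def)
  qed
  finally show ?thesis
    by (simp add: triangles_eq_card_neighbour_edges)
qed

lemma sum_local_clustering_Diff_neighbour:
  assumes "simple_graph S E"
  shows "(\<Sum>x\<in>nbrs S E u. local_clustering (S - {x}) E u) \<le> degree S E u * local_clustering S E u"
proof -
  have fin: "finite S"
    using simple_graph_finite[OF assms] .
  show ?thesis
  proof (cases "degree S E u \<ge> 3")
    case False
    have "local_clustering (S - {x}) E u = 0" if "x \<in> nbrs S E u" for x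
      using False degree_Diff_neighbour[OF fin that] unfolding local_clustering_def by auto
    then show ?thesis
      using local_clustering_nonneg[of S E u] by simp
  next
    case True
    let ?d = "real (degree S E u)" and ?T = "real (triangles S E u)"
    have "(\<Sum>x\<in>nbrs S E u. local_clustering (S - {x}) E u)
        = (\<Sum>x\<in>nbrs S E u. 2 * real (triangles (S - {x}) E u) / ((?d - 1) * (?d - 2)))"
      using True degree_Diff_neighbour[OF fin]
      by (intro sum.cong) (auto simp: local_clustering_def of_nat_diff algebra_simps)
    also have "\<dots> = 2 * real (\<Sum>x\<in>nbrs S E u. triangles (S - {x}) E u) / ((?d - 1) * (?d - 2))"
      by (simp add: sum_divide_distrib[symmetric] sum_distrib_left[symmetric])
    also have "\<dots> = 2 * (?T * (?d - 2)) / ((?d - 1) * (?d - 2))"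
      using True by (simp add: sum_triangles_Diff_neighbour[OF fin simple_graph_irrefl[OF assms]] of_nat_diff)
    also have "\<dots> = ?d * local_clustering S E u"
    proof -
      have "?d \<ge> 3"
        using True by simp
      then have "2 * (?T * (?d - 2)) / ((?d - 1) * (?d - 2)) = ?d * (2 * ?T / (?d * (?d - 1)))"
        by (simp add: divide_simps)
      then show ?thesis
        using True by (simp add: local_clustering_def)
    qed
    finally show ?thesis by simp
  qed
qed

lemma sum_local_clustering_Diff_vertex:
  assumes "simple_graph S E" and "u \<in> S"
  shows "(\<Sum>x\<in>S - {u}. local_clustering (S - {x}) E u) \<le> (card S - 1) * local_clustering S E u"
proof -
  let ?N = "nbrs S E u" and ?C = "\<lambda>x. local_clustering (S - {x}) E u"
  have fin: "finite (S - {u})"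
    using simple_graph_finite[OF assms(1)] by simp
  have N_sub: "?N \<subseteq> S - {u}"
    using simple_graph_irrefl[OF assms(1)] unfolding nbrs_def by auto
  have card_rest: "card (S - {u} - ?N) = card S - 1 - degree S E u"
    using assms(2) fin N_sub unfolding degree_def
    by (simp add: card_Diff_subset finite_subset)
  have deg_le: "degree S E u \<le> card S - 1"
    using card_mono[OF fin N_sub] assms(2) fin unfolding degree_def by simp
  have "(\<Sum>x\<in>S - {u} - ?N. ?C x) = (\<Sum>x\<in>S - {u} - ?N. local_clustering S E u)"
    by (intro sum.cong) (auto simp: local_clustering_Diff_non_neighbour)
  then have rest: "(\<Sum>x\<in>S - {u} - ?N. ?C x) = (card S - 1 - degree S E u) * local_clustering S E u"
    using card_rest by simp
  have "(\<Sum>x\<in>S - {u}. ?C x) = (\<Sum>x\<in>?N. ?C x) + (\<Sum>x\<in>S - {u} - ?N. ?C x)"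
    using sum.subset_diff[OF N_sub fin] by (simp add: add.commute)
  also have "\<dots> \<le> (degree S E u + (card S - 1 - degree S E u)) * local_clustering S E u"
    using sum_local_clustering_Diff_neighbour[OF assms(1)] rest by (simp add: distrib_right)
  also have "degree S E u + (card S - 1 - degree S E u) = card S - 1"
    using deg_le by simp
  finally show ?thesis
    by (simp only: of_nat_add[symmetric])
qed

lemma sum_sum_Diff_singleton_swap:
  assumes "finite S"
  shows "(\<Sum>x\<in>S. \<Sum>u\<in>S - {x}. f x u) = (\<Sum>u\<in>S. \<Sum>x\<in>S - {u}. f x u)"
proof -
  have "\<And>x. S - {x} = {u\<in>S. x \<noteq> u}" and "\<And>u. S - {u} = {x\<in>S. x \<noteq> u}"
    by auto
  then show ?thesis
    using sum.swap_restrict[OF assms assms, of f "\<lambda>x u. x \<noteq> u"] by simp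
qed

lemma sum_avg_clustering_Diff_vertex:
  assumes "simple_graph S E" and "card S \<ge> 2"
  shows "(\<Sum>x\<in>S. avg_clustering (S - {x}) E) \<le> card S * avg_clustering S E"
proof -
  let ?C = "\<lambda>x u. local_clustering (S - {x}) E u" and ?n = "real (card S)"
  have fin: "finite S"
    using simple_graph_finite[OF assms(1)] .
  have n: "?n - 1 > 0" and card_Diff: "\<And>x. x \<in> S \<Longrightarrow> real (card (S - {x})) = ?n - 1"
    using assms(2) fin by (auto simp: of_nat_diff)
  have "(\<Sum>x\<in>S. avg_clustering (S - {x}) E) = (\<Sum>x\<in>S. (\<Sum>u\<in>S - {x}. ?C x u) / (?n - 1))"
    using card_Diff by (intro sum.cong) (simp_all add: avg_clustering_def)
  also have "\<dots> = (\<Sum>x\<in>S. \<Sum>u\<in>S - {x}. ?C x u) / (?n - 1)"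
    by (rule sum_divide_distrib[symmetric])
  also have "\<dots> = (\<Sum>u\<in>S. \<Sum>x\<in>S - {u}. ?C x u) / (?n - 1)"
    by (simp only: sum_sum_Diff_singleton_swap[OF fin, of ?C])
    \<comment> \<open>instantiating f keeps the permutative swap rule from looping\<close>
  also have "\<dots> \<le> (\<Sum>u\<in>S. (?n - 1) * local_clustering S E u) / (?n - 1)"
    using sum_local_clustering_Diff_vertex[OF assms(1)] card_Diff n
    by (intro divide_right_mono sum_mono) auto
  also have "\<dots> = card S * avg_clustering S E"
    using n unfolding avg_clustering_def by (simp add: sum_distrib_left[symmetric])
  finally show ?thesis .
qed

theorem mainTheorem7:
  fixes V :: "'a set" and E :: "'a \<Rightarrow> 'a \<Rightarrow> bool"
  assumes "simple_graph V E" and "card V \<ge> 2"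
  shows "\<exists>u\<in>V. avg_clustering (V - {u}) E \<le> avg_clustering V E"
proof (rule ccontr)
  assume "\<not> ?thesis"
  moreover have "finite V" and "V \<noteq> {}"
    using simple_graph_finite[OF assms(1)] assms(2) by auto
  ultimately have "(\<Sum>u\<in>V. avg_clustering V E) < (\<Sum>u\<in>V. avg_clustering (V - {u}) E)"
    by (intro sum_strict_mono) auto
  then show False
    using sum_avg_clustering_Diff_vertex[OF assms] by simp
qed

end
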